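(* If a graph matroid family $\mathcal{M}$ is bounded, then it has the Lovász-Yemini property.
   Context: All graphs are finite and simple and have no isolated vertices. A graph matroid family $\mathcal{M}$ assigns to every graph $G$ a matroid $\mathcal{M}(G)$ on $E(G)$ such that (i) every graph isomorphism $V(G)\to V(H)$ induces an isomorphism $\mathcal{M}(G)\to\mathcal{M}(H)$, and (ii) for every subgraph $H$ of $G$, $\mathcal{M}(H)$ is the restriction of $\mathcal{M}(G)$ to $E(H)$. $r(G)$ is the rank of $\mathcal{M}(G)$. $\mathcal{M}$ is bounded if $r(K_n)$ is bounded in $n$. $G$ is $\mathcal{M}$-rigid if $r(G)=r(K_{V(G)})$. $\mathcal{M}$ has the Lovász-Yemini property if there is a nonnegative integer $c$ such that every $c$-connected graph is $\mathcal{M}$-rigid. *)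

theory Defs
  imports Main
begin

text \<open>A finite simple graph without isolated vertices, with vertices labelled by
natural numbers, is represented by its edge set: a finite set of 2-element sets.
Its vertex set is the union of its edges.\<close>

definition is_graph :: "nat set set \<Rightarrow> bool" where
  "is_graph G \<longleftrightarrow> finite G \<and> (\<forall>e\<in>G. card e = 2)"

definition verts :: "nat set set \<Rightarrow> nat set" where
  "verts G = \<Union>G"

definition matroid :: "'b set \<Rightarrow> ('b set \<Rightarrow> bool) \<Rightarrow> bool" where
  "matroid E indep \<longleftrightarrow> finite E \<and> indep {} \<and>
     (\<forall>I. indep I \<longrightarrow> I \<subseteq> E) \<and>
     (\<forall>I J. indep I \<longrightarrow> J \<subseteq> I \<longrightarrow> indep J) \<and>
     (\<forall>I J. indep I \<longrightarrow> indep J \<longrightarrow> card I < card J \<longrightarrow>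
        (\<exists>e\<in>J - I. indep (insert e I)))"

definition mrank :: "('b set \<Rightarrow> bool) \<Rightarrow> 'b set \<Rightarrow> nat" where
  "mrank indep X = Max {card I | I. I \<subseteq> X \<and> indep I}"

definition map_edges :: "(nat \<Rightarrow> nat) \<Rightarrow> nat set set \<Rightarrow> nat set set" where
  "map_edges f I = (\<lambda>e. f ` e) ` I"

text \<open>A graph matroid family: to every graph G a matroid (given by independence)
on E(G), invariant under graph isomorphisms and compatible with restriction to
subgraphs.  (A subgraph of a graph without isolated vertices is determined by its
edge set, which is a subset of E(G).)\<close>

definition graph_matroid_family :: "(nat set set \<Rightarrow> nat set set \<Rightarrow> bool) \<Rightarrow> bool" where
  "graph_matroid_family M \<longleftrightarrow>
     (\<forall>G. is_graph G \<longrightarrow> matroid G (M G)) \<and>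
     (\<forall>G f. is_graph G \<longrightarrow> inj_on f (verts G) \<longrightarrow>
        (\<forall>I. I \<subseteq> G \<longrightarrow> (M (map_edges f G) (map_edges f I) \<longleftrightarrow> M G I))) \<and>
     (\<forall>G H. is_graph G \<longrightarrow> H \<subseteq> G \<longrightarrow>
        (\<forall>I. I \<subseteq> H \<longrightarrow> (M H I \<longleftrightarrow> M G I)))"

definition grank :: "(nat set set \<Rightarrow> nat set set \<Rightarrow> bool) \<Rightarrow> nat set set \<Rightarrow> nat" where
  "grank M G = mrank (M G) G"

definition complete_on :: "nat set \<Rightarrow> nat set set" where
  "complete_on V = {{u, v} | u v. u \<in> V \<and> v \<in> V \<and> u \<noteq> v}"

definition K :: "nat \<Rightarrow> nat set set" where
  "K n = complete_on {0..<n}"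

definition bounded_family :: "(nat set set \<Rightarrow> nat set set \<Rightarrow> bool) \<Rightarrow> bool" where
  "bounded_family M \<longleftrightarrow> (\<exists>B. \<forall>n. grank M (K n) \<le> B)"

definition rigid :: "(nat set set \<Rightarrow> nat set set \<Rightarrow> bool) \<Rightarrow> nat set set \<Rightarrow> bool" where
  "rigid M G \<longleftrightarrow> grank M G = grank M (complete_on (verts G))"

definition connected_minus :: "nat set set \<Rightarrow> nat set \<Rightarrow> bool" where
  "connected_minus G X \<longleftrightarrow>
     (\<forall>u\<in>verts G - X. \<forall>v\<in>verts G - X.
        (u, v) \<in> {(x, y). {x, y} \<in> G \<and> x \<notin> X \<and> y \<notin> X}\<^sup>*)"

definition k_connected :: "nat \<Rightarrow> nat set set \<Rightarrow> bool" where
  "k_connected k G \<longleftrightarrow> card (verts G) \<ge> k + 1 \<and>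
     (\<forall>X. X \<subseteq> verts G \<longrightarrow> card X < k \<longrightarrow> connected_minus G X)"

definition lovasz_yemini :: "(nat set set \<Rightarrow> nat set set \<Rightarrow> bool) \<Rightarrow> bool" where
  "lovasz_yemini M \<longleftrightarrow> (\<exists>c. \<forall>G. is_graph G \<longrightarrow> k_connected c G \<longrightarrow> rigid M G)"

end

theory Submission
  imports Defs
begin

text \<open>The ranks of the matchings \<open>m K\<^sub>2\<close> are nondecreasing in \<open>m\<close> and bounded by the
ranks of the complete graphs, so for some \<open>m\<close> adding an \<open>(m+1)\<close>-st edge does not raise
the rank: that edge is spanned by an independent set of the first \<open>m\<close> edges.  In a
\<open>(2m+3)\<close>-connected graph \<open>G\<close>, greedily using connectivity, any two vertices \<open>u, v\<close> can be
avoided by a matching of \<open>m\<close> edges of \<open>G\<close>.  Mapping \<open>(m+1) K\<^sub>2\<close> onto this matching plus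
\<open>uv\<close>, isomorphism invariance shows that every edge \<open>uv\<close> of the complete graph on \<open>V(G)\<close>
is spanned by edges of \<open>G\<close>, hence \<open>r(G) = r(K\<^bsub>V(G)\<^esub>)\<close>.\<close>

lemma matroid_indep_subset: "matroid E indep \<Longrightarrow> indep I \<Longrightarrow> I \<subseteq> E"
  unfolding matroid_def by blast

lemma matroid_indep_finite: "matroid E indep \<Longrightarrow> indep I \<Longrightarrow> finite I"
  using matroid_indep_subset finite_subset unfolding matroid_def by metis

lemma matroid_indep_empty: "matroid E indep \<Longrightarrow> indep {}"
  unfolding matroid_def by blast

lemma matroid_indep_antimono: "matroid E indep \<Longrightarrow> indep I \<Longrightarrow> J \<subseteq> I \<Longrightarrow> indep J"
  unfolding matroid_def by blast

lemma matroid_augment: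
  "matroid E indep \<Longrightarrow> indep I \<Longrightarrow> indep J \<Longrightarrow> card I < card J \<Longrightarrow>
     \<exists>e\<in>J - I. indep (insert e I)"
  unfolding matroid_def by blast

lemma finite_indep_cards:
  assumes "matroid E indep"
  shows "finite {card I | I. I \<subseteq> X \<and> indep I}"
proof -
  have "finite E" using assms unfolding matroid_def by blast
  then have "{card I | I. I \<subseteq> X \<and> indep I} \<subseteq> {..card E}"
    using matroid_indep_subset[OF assms] card_mono by fastforce
  then show ?thesis using finite_subset by blast
qed

lemma mrank_obtain:
  assumes "matroid E indep"
  obtains I where "I \<subseteq> X" "indep I" "card I = mrank indep X"
proof -
  have "card {} \<in> {card I | I. I \<subseteq> X \<and> indep I}"
    using matroid_indep_empty[OF assms] by (auto intro!: exI[of _ "{}"])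
  then have "mrank indep X \<in> {card I | I. I \<subseteq> X \<and> indep I}"
    unfolding mrank_def by (intro Max_in[OF finite_indep_cards[OF assms]]) auto
  then show thesis using that by auto
qed

lemma card_le_mrank:
  "matroid E indep \<Longrightarrow> I \<subseteq> X \<Longrightarrow> indep I \<Longrightarrow> card I \<le> mrank indep X"
  unfolding mrank_def by (rule Max_ge[OF finite_indep_cards]) blast+

lemma mrank_mono:
  assumes "matroid E indep" "X \<subseteq> Y"
  shows "mrank indep X \<le> mrank indep Y"
proof -
  obtain I where "I \<subseteq> X" "indep I" "card I = mrank indep X"
    using mrank_obtain[OF assms(1)] .
  then show ?thesis using card_le_mrank[OF assms(1)] assms(2) by (metis order_trans)
qed

lemma matroid_augment_to_card:
  assumes m: "matroid E indep"
  shows "indep A \<Longrightarrow> indep I \<Longrightarrow> card A \<le> card I \<Longrightarrow>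
     \<exists>C. A \<subseteq> C \<and> C \<subseteq> A \<union> I \<and> indep C \<and> card C = card I"
proof (induction "card I - card A" arbitrary: A)
  case 0
  then have "card A = card I" by simp
  then show ?case using 0 by blast
next
  case (Suc n)
  have "card A < card I" using Suc.hyps(2) by simp
  then obtain e where e: "e \<in> I - A" "indep (insert e A)"
    using matroid_augment[OF m Suc.prems(1,2)] by blast
  have card_eA: "card (insert e A) = Suc (card A)"
    using e(1) matroid_indep_finite[OF m Suc.prems(1)] by simp
  have "n = card I - card (insert e A)" "card (insert e A) \<le> card I"
    using Suc.hyps(2) card_eA by simp_all
  then obtain C where "insert e A \<subseteq> C" "C \<subseteq> insert e A \<union> I" "indep C" "card C = card I"
    using Suc.hyps(1)[OF _ e(2) Suc.prems(2)] by blast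
  then show ?case using e(1) by blast
qed

lemma mrank_eq_if_spans:
  assumes m: "matroid E indep" and "X \<subseteq> Y"
    and spans: "\<And>e. e \<in> Y - X \<Longrightarrow> \<exists>A\<subseteq>X. indep A \<and> \<not> indep (insert e A)"
  shows "mrank indep X = mrank indep Y"
proof -
  obtain I where I: "I \<subseteq> X" "indep I" "card I = mrank indep X"
    using mrank_obtain[OF m] .
  have maximal: "card J \<le> card I" if "J \<subseteq> X" "indep J" for J
    using card_le_mrank[OF m that] I(3) by simp
  txt \<open>An element \<open>e\<close> augmenting \<open>I\<close> lies outside \<open>X\<close>.  Extend its spanning set \<open>A\<close> inside
    \<open>A \<union> I\<close> to size \<open>|I|\<close> and augment again from \<open>I + e\<close>: the new element can be
    neither \<open>e\<close> (as \<open>A + e\<close> is dependent) nor an element of \<open>I\<close> (by maximality).\<close>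
  have bound: "card J \<le> card I" if J: "J \<subseteq> Y" "indep J" for J
  proof (rule ccontr)
    assume "\<not> ?thesis"
    then have "card I < card J" by simp
    then obtain e where e: "e \<in> J - I" "indep (insert e I)"
      using matroid_augment[OF m I(2) J(2)] by blast
    have card_eI: "card (insert e I) = Suc (card I)"
      using e(1) matroid_indep_finite[OF m I(2)] by simp
    have "e \<notin> X"
    proof
      assume "e \<in> X"
      then have "card (insert e I) \<le> card I" using maximal I(1) e(2) by simp
      then show False using card_eI by simp
    qed
    then have "e \<in> Y - X" using e(1) J(1) by blast
    then obtain A where A: "A \<subseteq> X" "indep A" "\<not> indep (insert e A)"
      using spans by blast
    obtain C where C: "A \<subseteq> C" "C \<subseteq> A \<union> I" "indep C" "card C = card I"
      using matroid_augment_to_card[OF m A(2) I(2) maximal[OF A(1,2)]] by blast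
    have "card C < card (insert e I)" using C(4) card_eI by simp
    then obtain f where f: "f \<in> insert e I - C" "indep (insert f C)"
      using matroid_augment[OF m C(3) e(2)] by blast
    show False
    proof (cases "f = e")
      case True
      then have "indep (insert e A)"
        using matroid_indep_antimono[OF m f(2)] C(1) by blast
      then show False using A(3) by blast
    next
      case False
      then have "insert f C \<subseteq> X" using f(1) C(2) A(1) I(1) by blast
      then have "card (insert f C) \<le> card I" using maximal f(2) by blast
      moreover have "card (insert f C) = Suc (card I)"
        using f(1) C(4) matroid_indep_finite[OF m C(3)] by simp
      ultimately show False by simp
    qed
  qed
  obtain J where J: "J \<subseteq> Y" "indep J" "card J = mrank indep Y"
    using mrank_obtain[OF m] .
  then have "mrank indep Y \<le> mrank indep X" using bound[OF J(1,2)] I(3) by linarith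
  then show ?thesis using mrank_mono[OF m \<open>X \<subseteq> Y\<close>] by linarith
qed

lemma spanning_set_if_mrank_insert_le:
  assumes m: "matroid E indep" and "e \<notin> X"
    and "mrank indep (insert e X) \<le> mrank indep X"
  obtains A where "A \<subseteq> X" "indep A" "\<not> indep (insert e A)"
proof -
  obtain A where A: "A \<subseteq> X" "indep A" "card A = mrank indep X"
    using mrank_obtain[OF m] .
  have "\<not> indep (insert e A)"
  proof
    assume indep_eA: "indep (insert e A)"
    have "insert e A \<subseteq> insert e X" using A(1) by blast
    then have "card (insert e A) \<le> mrank indep (insert e X)"
      using card_le_mrank[OF m _ indep_eA] by simp
    moreover have "card (insert e A) = Suc (card A)"
      using card_insert_disjoint[OF matroid_indep_finite[OF m A(2)]] A(1) \<open>e \<notin> X\<close> by blast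
    ultimately show False using assms(3) A(3) by simp
  qed
  then show thesis using that A(1,2) by blast
qed

lemma ex_Suc_le_if_bounded:
  fixes f :: "nat \<Rightarrow> nat"
  assumes "\<And>n. f n \<le> B"
  shows "\<exists>m. f (Suc m) \<le> f m"
proof (rule ccontr)
  assume "\<not> ?thesis"
  then have step: "f n < f (Suc n)" for n by (simp add: not_le)
  have "n \<le> f n" for n
  proof (induction n)
    case (Suc n)
    then show ?case using step[of n] by simp
  qed simp
  then have "Suc B \<le> f (Suc B)" .
  then show False using assms[of "Suc B"] by simp
qed

lemma finite_verts: "is_graph G \<Longrightarrow> finite (verts G)"
  unfolding is_graph_def verts_def by (metis card.infinite finite_Union zero_neq_numeral)

lemma verts_mono: "H \<subseteq> G \<Longrightarrow> verts H \<subseteq> verts G"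
  unfolding verts_def by blast

lemma verts_map_edges: "verts (map_edges f G) = f ` verts G"
  unfolding verts_def map_edges_def by blast

lemma map_edges_mono: "I \<subseteq> J \<Longrightarrow> map_edges f I \<subseteq> map_edges f J"
  unfolding map_edges_def by blast

lemma map_edges_cong: "(\<And>x. x \<in> verts G \<Longrightarrow> f x = g x) \<Longrightarrow> map_edges f G = map_edges g G"
  unfolding map_edges_def verts_def by (intro image_cong refl) auto

lemma is_graph_complete_on: "finite V \<Longrightarrow> is_graph (complete_on V)"
proof -
  assume "finite V"
  moreover have "complete_on V \<subseteq> Pow V" unfolding complete_on_def by auto
  ultimately have "finite (complete_on V)" by (meson finite_Pow_iff finite_subset)
  then show ?thesis unfolding is_graph_def complete_on_def by auto
qed

lemma graph_subset_complete_on: "is_graph G \<Longrightarrow> G \<subseteq> complete_on (verts G)"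
proof
  fix e assume "is_graph G" "e \<in> G"
  then obtain x y where "e = {x, y}" "x \<noteq> y"
    unfolding is_graph_def by (meson card_2_iff)
  then show "e \<in> complete_on (verts G)"
    using \<open>e \<in> G\<close> unfolding complete_on_def verts_def by blast
qed

definition matching_graph :: "nat \<Rightarrow> nat set set" where
  "matching_graph k = (\<lambda>i. {2*i, 2*i+1}) ` {..<k}"

lemma is_graph_matching_graph: "is_graph (matching_graph k)"
  unfolding is_graph_def matching_graph_def by auto

lemma verts_matching_graph: "verts (matching_graph k) = {0..<2*k}"
proof
  show "verts (matching_graph k) \<subseteq> {0..<2*k}"
    unfolding verts_def matching_graph_def by auto
  show "{0..<2*k} \<subseteq> verts (matching_graph k)"
  proof
    fix x assume "x \<in> {0..<2*k}"
    then have "x div 2 < k" "x = 2*(x div 2) \<or> x = 2*(x div 2)+1" by auto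
    then show "x \<in> verts (matching_graph k)" unfolding verts_def matching_graph_def by blast
  qed
qed

lemma matching_graph_Suc: "matching_graph (Suc k) = insert {2*k, 2*k+1} (matching_graph k)"
  by (simp add: matching_graph_def lessThan_Suc)

lemma last_edge_notin_matching_graph: "{2*k, 2*k+1} \<notin> matching_graph k"
proof
  assume "{2*k, 2*k+1} \<in> matching_graph k"
  then have "2*k \<in> verts (matching_graph k)" unfolding verts_def by blast
  then show False unfolding verts_matching_graph by simp
qed

lemma matching_graph_subset_K: "matching_graph k \<subseteq> K (2*k)"
  unfolding matching_graph_def K_def complete_on_def by fastforce

lemma atLeast0_lessThan_double_Suc:
  "{0..<2*Suc k} = insert (2*k) (insert (2*k+1) {0..<2*k})"
  by auto

lemma image_fun_upd_pair_below:
  fixes k :: nat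
  shows "g(2*k := w, 2*k+1 := z) ` {0..<2*k} = g ` {0..<2*k}"
  by (rule image_cong) simp_all

lemma image_fun_upd_pair:
  fixes k :: nat
  shows "g(2*k := w, 2*k+1 := z) ` {0..<2*Suc k} = insert w (insert z (g ` {0..<2*k}))"
  unfolding atLeast0_lessThan_double_Suc image_insert image_fun_upd_pair_below by simp

lemma inj_on_fun_upd_pair:
  fixes k :: nat
  assumes "inj_on g {0..<2*k}" "w \<noteq> z" "w \<notin> g ` {0..<2*k}" "z \<notin> g ` {0..<2*k}"
  shows "inj_on (g(2*k := w, 2*k+1 := z)) {0..<2*Suc k}"
proof -
  let ?g = "g(2*k := w, 2*k+1 := z)"
  have below: "inj_on ?g {0..<2*k}"
    using assms(1) inj_on_cong[of "{0..<2*k}" ?g g] by simp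
  have "{0..<2*k} - {2*k+1} = {0..<2*k}" "insert (2*k+1) {0..<2*k} - {2*k} = insert (2*k+1) {0..<2*k}"
    by auto
  then show ?thesis
    unfolding atLeast0_lessThan_double_Suc inj_on_insert using below assms(2-4)
    by (simp only: image_insert image_fun_upd_pair_below) simp
qed

lemma map_edges_fun_upd_pair_matching_graph:
  "map_edges (g(2*k := w, 2*k+1 := z)) (matching_graph (Suc k))
     = insert {w, z} (map_edges g (matching_graph k))"
proof -
  have "map_edges (g(2*k := w, 2*k+1 := z)) (matching_graph k) = map_edges g (matching_graph k)"
    by (rule map_edges_cong) (simp add: verts_matching_graph)
  then show ?thesis by (simp add: matching_graph_Suc map_edges_def)
qed

lemma connected_minus_obtain_edge:
  assumes "connected_minus G S" "w \<in> verts G - S" "y \<in> verts G - S" "w \<noteq> y"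
  obtains z where "{w, z} \<in> G" "z \<notin> S"
proof -
  have "(w, y) \<in> {(x, y). {x, y} \<in> G \<and> x \<notin> S \<and> y \<notin> S}\<^sup>*"
    using assms(1-3) unfolding connected_minus_def by blast
  then show thesis using that assms(4) by (cases rule: converse_rtranclE) auto
qed

text \<open>Greedy matching: a vertex set of size less than \<open>c\<close> cannot disconnect a \<open>c\<close>-connected
graph, so outside the vertices used so far and \<open>X\<close> there is always one more edge.\<close>

lemma k_connected_matching:
  assumes G: "is_graph G" and conn: "k_connected c G" and X: "X \<subseteq> verts G"
  shows "2*k + card X < c \<Longrightarrow> \<exists>g. inj_on g {0..<2*k} \<and> g ` {0..<2*k} \<inter> X = {}
     \<and> map_edges g (matching_graph k) \<subseteq> G"
proof (induction k)
  case 0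
  then show ?case by (simp add: matching_graph_def map_edges_def)
next
  case (Suc k)
  then obtain g where g: "inj_on g {0..<2*k}" "g ` {0..<2*k} \<inter> X = {}"
    "map_edges g (matching_graph k) \<subseteq> G" by auto
  define S where "S = g ` {0..<2*k} \<union> X"
  have "g ` {0..<2*k} \<subseteq> verts G"
    using verts_mono[OF g(3)] by (simp add: verts_map_edges verts_matching_graph)
  then have S_verts: "S \<subseteq> verts G" using X unfolding S_def by blast
  have "card S \<le> 2*k + card X"
    unfolding S_def using card_Un_le[of "g ` {0..<2*k}" X] card_image_le[of "{0..<2*k}" g]
    by simp
  moreover have "c + 1 \<le> card (verts G)" using conn unfolding k_connected_def by blast
  moreover have "card (verts G - S) = card (verts G) - card S"
    using card_Diff_subset[OF finite_subset[OF S_verts finite_verts[OF G]] S_verts] .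
  moreover have c_large: "2*k + card X + 2 < c" using Suc.prems by simp
  ultimately have "2 \<le> card (verts G - S)" by linarith
  then obtain T where T: "T \<subseteq> verts G - S" "card T = 2"
    by (meson obtain_subset_with_card_n)
  then obtain w y where "T = {w, y}" "w \<noteq> y"
    by (meson card_2_iff)
  then have wy: "w \<in> verts G - S" "y \<in> verts G - S" "w \<noteq> y" using T(1) by auto
  have "card S < c" using \<open>card S \<le> 2*k + card X\<close> c_large by linarith
  then have "connected_minus G S" using conn S_verts unfolding k_connected_def by blast
  then obtain z where z: "{w, z} \<in> G" "z \<notin> S"
    by (rule connected_minus_obtain_edge[OF _ wy])
  have "w \<noteq> z" using z(1) G unfolding is_graph_def by fastforce
  show ?case
  proof (intro exI conjI)
    show "inj_on (g(2*k := w, 2*k+1 := z)) {0..<2*Suc k}"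
      using inj_on_fun_upd_pair[OF g(1) \<open>w \<noteq> z\<close>] wy(1) z(2) unfolding S_def by blast
    show "g(2*k := w, 2*k+1 := z) ` {0..<2*Suc k} \<inter> X = {}"
      unfolding image_fun_upd_pair using g(2) wy(1) z(2) unfolding S_def by blast
    show "map_edges (g(2*k := w, 2*k+1 := z)) (matching_graph (Suc k)) \<subseteq> G"
      unfolding map_edges_fun_upd_pair_matching_graph using g(3) z(1) by blast
  qed
qed

lemma family_matroid:
  assumes "graph_matroid_family M" "is_graph G"
  shows "matroid G (M G)"
  using assms(1)[unfolded graph_matroid_family_def, THEN conjunct1] assms(2) by blast

lemma family_map_edges_iff:
  assumes "graph_matroid_family M" "is_graph G" "inj_on f (verts G)" "I \<subseteq> G"
  shows "M (map_edges f G) (map_edges f I) \<longleftrightarrow> M G I"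
  using assms(1)[unfolded graph_matroid_family_def, THEN conjunct2, THEN conjunct1] assms(2-4)
  by blast

lemma family_restrict:
  assumes "graph_matroid_family M" "is_graph G" "H \<subseteq> G" "I \<subseteq> H"
  shows "M H I \<longleftrightarrow> M G I"
  using assms(1)[unfolded graph_matroid_family_def, THEN conjunct2, THEN conjunct2] assms(2-4)
  by blast

lemma family_map_edges_into_iff:
  assumes M: "graph_matroid_family M" and "is_graph G" "is_graph W"
    and "inj_on h (verts G)" "map_edges h G \<subseteq> W" "I \<subseteq> G"
  shows "M W (map_edges h I) \<longleftrightarrow> M G I"
proof -
  have "map_edges h I \<subseteq> map_edges h G" using map_edges_mono \<open>I \<subseteq> G\<close> .
  then have "M W (map_edges h I) \<longleftrightarrow> M (map_edges h G) (map_edges h I)"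
    using family_restrict[OF M assms(3,5)] by blast
  also have "\<dots> \<longleftrightarrow> M G I" using family_map_edges_iff[OF M assms(2,4,6)] .
  finally show ?thesis .
qed

lemma grank_eq_mrank:
  assumes "graph_matroid_family M" "is_graph G" "H \<subseteq> G"
  shows "grank M H = mrank (M G) H"
proof -
  have "{card I | I. I \<subseteq> H \<and> M H I} = {card I | I. I \<subseteq> H \<and> M G I}"
    using family_restrict[OF assms] by (metis (no_types, lifting))
  then show ?thesis unfolding grank_def mrank_def by simp
qed

lemma grank_mono:
  assumes "graph_matroid_family M" "is_graph G" "H \<subseteq> G"
  shows "grank M H \<le> grank M G"
proof -
  have "grank M H = mrank (M G) H" by (rule grank_eq_mrank[OF assms])
  also have "\<dots> \<le> mrank (M G) G" by (rule mrank_mono[OF family_matroid[OF assms(1,2)] assms(3)])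
  finally show ?thesis unfolding grank_def .
qed

lemma bounded_family_critical_matching:
  assumes M: "graph_matroid_family M" and "bounded_family M"
  obtains m A where "A \<subseteq> matching_graph m" "M (matching_graph (Suc m)) A"
    "\<not> M (matching_graph (Suc m)) (insert {2*m, 2*m+1} A)"
proof -
  obtain B where B: "\<And>n. grank M (K n) \<le> B"
    using \<open>bounded_family M\<close> unfolding bounded_family_def by blast
  have "grank M (matching_graph k) \<le> B" for k
  proof -
    have "is_graph (K (2*k))" unfolding K_def by (rule is_graph_complete_on) simp
    then have "grank M (matching_graph k) \<le> grank M (K (2*k))"
      using grank_mono[OF M _ matching_graph_subset_K] by blast
    then show ?thesis using B[of "2*k"] by linarith
  qed
  then have "\<exists>m. grank M (matching_graph (Suc m)) \<le> grank M (matching_graph m)"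
    by (rule ex_Suc_le_if_bounded)
  then obtain m where m: "grank M (matching_graph (Suc m)) \<le> grank M (matching_graph m)" ..
  let ?H = "matching_graph (Suc m)"
  have sub: "matching_graph m \<subseteq> ?H" unfolding matching_graph_Suc by blast
  have "mrank (M ?H) (insert {2*m, 2*m+1} (matching_graph m)) \<le> mrank (M ?H) (matching_graph m)"
    using m unfolding grank_eq_mrank[OF M is_graph_matching_graph sub]
    by (simp add: grank_def matching_graph_Suc)
  then obtain A where "A \<subseteq> matching_graph m" "M ?H A" "\<not> M ?H (insert {2*m, 2*m+1} A)"
    by (rule spanning_set_if_mrank_insert_le[OF family_matroid[OF M is_graph_matching_graph]
        last_edge_notin_matching_graph])
  then show thesis by (rule that)
qed

lemma k_connected_spans_edge:
  assumes M: "graph_matroid_family M"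
    and A0: "A0 \<subseteq> matching_graph m" "M (matching_graph (Suc m)) A0"
      "\<not> M (matching_graph (Suc m)) (insert {2*m, 2*m+1} A0)"
    and G: "is_graph G" "k_connected (2*m+3) G"
    and W: "is_graph W" "G \<subseteq> W"
    and uv: "u \<in> verts G" "v \<in> verts G" "u \<noteq> v" "{u, v} \<in> W"
  shows "\<exists>A\<subseteq>G. M W A \<and> \<not> M W (insert {u, v} A)"
proof -
  have "{u, v} \<subseteq> verts G" "2*m + card {u, v} < 2*m+3" using uv by simp_all
  from k_connected_matching[OF G this] obtain g where g: "inj_on g {0..<2*m}"
    "g ` {0..<2*m} \<inter> {u, v} = {}" "map_edges g (matching_graph m) \<subseteq> G"
    by (elim exE conjE)
  define h where "h = g(2*m := u, 2*m+1 := v)"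
  let ?H = "matching_graph (Suc m)"
  have "u \<notin> g ` {0..<2*m}" "v \<notin> g ` {0..<2*m}" using g(2) by blast+
  then have inj: "inj_on h (verts ?H)"
    unfolding h_def verts_matching_graph by (rule inj_on_fun_upd_pair[OF g(1) uv(3)])
  have "insert {u, v} (map_edges g (matching_graph m)) \<subseteq> W" using g(3) W(2) uv(4) by blast
  then have "map_edges h ?H \<subseteq> W"
    unfolding h_def map_edges_fun_upd_pair_matching_graph .
  note transport = family_map_edges_into_iff[OF M is_graph_matching_graph W(1) inj this]
  have A0_sub: "A0 \<subseteq> ?H" "insert {2*m, 2*m+1} A0 \<subseteq> ?H"
    using A0(1) unfolding matching_graph_Suc by blast+
  have "map_edges h (matching_graph m) = map_edges g (matching_graph m)"
    by (rule map_edges_cong) (simp add: h_def verts_matching_graph)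
  then have "map_edges h A0 \<subseteq> G" using map_edges_mono[OF A0(1), of h] g(3) by simp
  moreover have "M W (map_edges h A0)" using transport[OF A0_sub(1)] A0(2) by simp
  moreover have "\<not> M W (insert {u, v} (map_edges h A0))"
  proof -
    have "map_edges h (insert {2*m, 2*m+1} A0) = insert {u, v} (map_edges h A0)"
      by (simp add: h_def map_edges_def)
    then show ?thesis using transport[OF A0_sub(2)] A0(3) by simp
  qed
  ultimately show ?thesis by blast
qed

theorem lemma3p12:
  assumes "graph_matroid_family M"
    and "bounded_family M"
  shows "lovasz_yemini M"
proof -
  obtain m A0 where A0: "A0 \<subseteq> matching_graph m" "M (matching_graph (Suc m)) A0"
    "\<not> M (matching_graph (Suc m)) (insert {2*m, 2*m+1} A0)"
    using bounded_family_critical_matching[OF assms] .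
  show ?thesis unfolding lovasz_yemini_def
  proof (intro exI[of _ "2*m+3"] allI impI)
    fix G assume G: "is_graph G" "k_connected (2*m+3) G"
    define W where "W = complete_on (verts G)"
    have W: "is_graph W" "G \<subseteq> W"
      unfolding W_def using is_graph_complete_on[OF finite_verts] graph_subset_complete_on G(1)
      by simp_all
    have "mrank (M W) G = mrank (M W) W"
    proof (rule mrank_eq_if_spans[OF family_matroid[OF assms(1) W(1)] W(2)])
      fix e assume e: "e \<in> W - G"
      then obtain u v where uv: "e = {u, v}" "u \<in> verts G" "v \<in> verts G" "u \<noteq> v"
        unfolding W_def complete_on_def by blast
      then show "\<exists>A\<subseteq>G. M W A \<and> \<not> M W (insert e A)"
        using k_connected_spans_edge[OF assms(1) A0 G W uv(2-4)] e by simp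
    qed
    then show "rigid M G"
      unfolding rigid_def grank_eq_mrank[OF assms(1) W] by (simp add: grank_def W_def)
  qed
qed

end
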